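(* For real $J_1,J_2,J_3$, the vertex model on the periodic honeycomb lattice with the signature $$(r(000),\dots,r(111))=\big(e^{2(J_1+J_2+J_3)},e^{2J_3},e^{2J_2},e^{2J_1},e^{2J_1},e^{2J_2},e^{2J_3},e^{2(J_1+J_2+J_3)}\big)$$ at every vertex is orthogonally realizable.
   Context: Signatures are indexed by local configurations $000,001,\dots,111$ of the incident $(a,b,c)$-edges. A realization assigns to each edge an invertible $2\times2$ matrix $T_e$ and to each vertex a matchgate signature $m_v$ with $m_v=(T_a\otimes T_b\otimes T_c)r_v$ at black and $m_v=((T_a\otimes T_b\otimes T_c)^t)^{-1}r_v$ at white vertices, each $m_v$ satisfying the parity constraint (vanishing on all binary strings of one parity); the model is orthogonally realizable if a realization exists with all $T_e$ orthogonal. *)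

theory Defs
  imports "HOL-Analysis.Analysis"
begin

text \<open>Local configurations of the three incident edges (a,b,c) of a vertex are
  triples of bits (x_a, x_b, x_c); False = 0, True = 1.  A signature is a vector
  indexed by these 8 configurations.\<close>

type_synonym cfg = "bool \<times> bool \<times> bool"
type_synonym sigvec = "complex ^ cfg"
type_synonym mat2 = "complex ^ bool ^ bool"
type_synonym mat8 = "complex ^ cfg ^ cfg"

definition cfg_index :: "cfg \<Rightarrow> nat" where
  "cfg_index s = (case s of (x, y, z) \<Rightarrow> 4 * of_bool x + 2 * of_bool y + of_bool z)"

definition hamming_weight :: "cfg \<Rightarrow> nat" where
  "hamming_weight s = (case s of (x, y, z) \<Rightarrow> of_bool x + of_bool y + of_bool z)"

definition sig_of_list :: "complex list \<Rightarrow> sigvec" where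
  "sig_of_list l = (\<chi> s. l ! cfg_index s)"

definition ising_sig :: "real \<Rightarrow> real \<Rightarrow> real \<Rightarrow> sigvec" where
  "ising_sig J1 J2 J3 = sig_of_list (map (\<lambda>t. complex_of_real (exp t))
     [2*(J1+J2+J3), 2*J3, 2*J2, 2*J1, 2*J1, 2*J2, 2*J3, 2*(J1+J2+J3)])"

definition kron3 :: "mat2 \<Rightarrow> mat2 \<Rightarrow> mat2 \<Rightarrow> mat8" where
  "kron3 A B C = (\<chi> s x. (case s of (s1, s2, s3) \<Rightarrow> case x of (x1, x2, x3) \<Rightarrow>
      A $ s1 $ x1 * B $ s2 $ x2 * C $ s3 $ x3))"

definition parity_ok :: "sigvec \<Rightarrow> bool" where
  "parity_ok m \<longleftrightarrow> (\<forall>s. even (hamming_weight s) \<longrightarrow> m $ s = 0)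
                 \<or> (\<forall>s. odd (hamming_weight s) \<longrightarrow> m $ s = 0)"

text \<open>Periodic honeycomb lattice with M x N fundamental cells (a torus).
  Black vertices (i,j) and white vertices (i,j), 0 \<le> i < M, 0 \<le> j < N.
  Edge (k,i,j), k \<in> {0,1,2} (= a,b,c), is the k-edge of black vertex (i,j):
  a-edge (0,i,j) joins black (i,j) to white (i,j);
  b-edge (1,i,j) joins black (i,j) to white ((i+1) mod M, j);
  c-edge (2,i,j) joins black (i,j) to white (i, (j+1) mod N).
  Hence white (i,j) has a-edge (0,i,j), b-edge (1,(i+M-1) mod M,j),
  c-edge (2,i,(j+N-1) mod N).\<close>

definition honeycomb_realization ::
  "nat \<Rightarrow> nat \<Rightarrow> (nat \<Rightarrow> nat \<Rightarrow> sigvec) \<Rightarrow> (nat \<Rightarrow> nat \<Rightarrow> sigvec)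
   \<Rightarrow> (nat \<Rightarrow> nat \<Rightarrow> nat \<Rightarrow> mat2) \<Rightarrow> bool" where
  "honeycomb_realization M N rB rW T \<longleftrightarrow>
     (\<forall>k<3. \<forall>i<M. \<forall>j<N. invertible (T k i j)) \<and>
     (\<forall>i<M. \<forall>j<N.
        parity_ok (kron3 (T 0 i j) (T 1 i j) (T 2 i j) *v rB i j)) \<and>
     (\<forall>i<M. \<forall>j<N.
        parity_ok (matrix_inv (transpose
           (kron3 (T 0 i j) (T 1 ((i + M - 1) mod M) j) (T 2 i ((j + N - 1) mod N))))
           *v rW i j))"

definition honeycomb_orth_realizable ::
  "nat \<Rightarrow> nat \<Rightarrow> (nat \<Rightarrow> nat \<Rightarrow> sigvec) \<Rightarrow> (nat \<Rightarrow> nat \<Rightarrow> sigvec) \<Rightarrow> bool" where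
  "honeycomb_orth_realizable M N rB rW \<longleftrightarrow>
     (\<exists>T. honeycomb_realization M N rB rW T \<and>
          (\<forall>k<3. \<forall>i<M. \<forall>j<N. orthogonal_matrix (T k i j)))"

end

theory Submission
  imports Defs
begin

(* A single gauge transformation works on every edge: the normalized
   Hadamard matrix  H = (1/sqrt 2) [[1,1],[1,-1]],  which is real, symmetric and
   an involution, hence orthogonal.  At every vertex the transformed signature is
   then  K r  with  K = H (x) H (x) H;  since  K  is also a symmetric involution,
   the white-vertex formula  (K^t)^-1 r  reduces to the same  K r.
   The parity constraint comes from a symmetry: complementing all three input
   bits multiplies row  x  of  K  by  (-1)^|x|,  and the Ising signature is
   invariant under complementation, so  (K r)_x = 0  whenever  |x|  is odd. *)

lemma matrix_inv_eqI:
  fixes A B :: "'a::comm_semiring_1^'n^'n"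
  assumes AB: "A ** B = mat 1" and BA: "B ** A = mat 1"
  shows "matrix_inv A = B"
proof -
  let ?A' = "matrix_inv A"
  have "A ** ?A' = mat 1 \<and> ?A' ** A = mat 1"
    unfolding matrix_inv_def by (rule someI[of _ B]) (use AB BA in simp)
  then have "?A' ** A = mat 1" by blast
  then have "?A' = ?A' ** (A ** B)" using AB by simp
  also have "\<dots> = B" by (simp add: matrix_mul_assoc \<open>?A' ** A = mat 1\<close>)
  finally show ?thesis .
qed

lemma kron3_entry: "kron3 A B C $ (a, b, c) $ (x, y, z) = A $ a $ x * B $ b $ y * C $ c $ z"
  by (simp add: kron3_def)

lemma sum_cfg:
  "(\<Sum>s\<in>(UNIV::cfg set). f s) = (\<Sum>a\<in>UNIV. \<Sum>b\<in>UNIV. \<Sum>c\<in>UNIV. f (a, b, c))"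
  by (simp only: UNIV_Times_UNIV[symmetric] sum.cartesian_product')

lemma kron3_mult: "kron3 A B C ** kron3 A' B' C' = kron3 (A ** A') (B ** B') (C ** C')"
proof -
  have "(kron3 A B C ** kron3 A' B' C') $ (s1, s2, s3) $ (x1, x2, x3)
      = kron3 (A ** A') (B ** B') (C ** C') $ (s1, s2, s3) $ (x1, x2, x3)"
    for s1 s2 s3 x1 x2 x3
  proof -
    have "(kron3 A B C ** kron3 A' B' C') $ (s1, s2, s3) $ (x1, x2, x3)
        = (\<Sum>a\<in>UNIV. \<Sum>b\<in>UNIV. \<Sum>c\<in>UNIV.
             (A$s1$a * A'$a$x1) * ((B$s2$b * B'$b$x2) * (C$s3$c * C'$c$x3)))"
      unfolding matrix_matrix_mult_def vec_lambda_beta sum_cfg kron3_entry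
      by (simp only: mult.assoc mult.left_commute)
    also have "\<dots> = (\<Sum>a\<in>UNIV. A$s1$a * A'$a$x1)
                   * ((\<Sum>b\<in>UNIV. B$s2$b * B'$b$x2) * (\<Sum>c\<in>UNIV. C$s3$c * C'$c$x3))"
      by (simp only: sum_distrib_right, simp only: sum_distrib_left)
    also have "\<dots> = kron3 (A ** A') (B ** B') (C ** C') $ (s1, s2, s3) $ (x1, x2, x3)"
      by (simp add: kron3_entry matrix_matrix_mult_def mult.assoc)
    finally show ?thesis .
  qed
  then show ?thesis by (simp add: vec_eq_iff split_paired_all)
qed

lemma kron3_mat1: "kron3 (mat 1) (mat 1) (mat 1) = mat 1"
  by (auto simp: kron3_def mat_def vec_eq_iff)

lemma kron3_transpose: "transpose (kron3 A B C) = kron3 (transpose A) (transpose B) (transpose C)"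
  by (simp add: vec_eq_iff split_paired_all kron3_entry transpose_def)

definition hadamard :: mat2 where
  "hadamard = (\<chi> i j. if i \<and> j then - complex_of_real (1 / sqrt 2) else complex_of_real (1 / sqrt 2))"

lemma hadamard_transpose: "transpose hadamard = hadamard"
  by (simp add: hadamard_def transpose_def vec_eq_iff conj_commute)

lemma hadamard_involution: "hadamard ** hadamard = mat 1"
proof -
  have sqrt2: "complex_of_real (sqrt 2) * complex_of_real (sqrt 2) = 2"
    by (simp flip: of_real_mult)
  show ?thesis
    by (simp add: vec_eq_iff matrix_matrix_mult_def hadamard_def mat_def UNIV_bool sqrt2)
qed

lemma hadamard_orthogonal: "orthogonal_matrix hadamard"
  by (simp add: orthogonal_matrix_def hadamard_transpose hadamard_involution)

lemma hadamard_invertible: "invertible hadamard"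
  unfolding invertible_def using hadamard_involution by blast

text \<open>Being a symmetric involution, it is its own inverse transpose, so black and
  white vertices are transformed alike.\<close>

definition hadamard3 :: mat8 where
  "hadamard3 = kron3 hadamard hadamard hadamard"

lemma hadamard3_inverse_transpose: "matrix_inv (transpose hadamard3) = hadamard3"
proof -
  have "hadamard3 ** hadamard3 = mat 1"
    by (simp add: hadamard3_def kron3_mult hadamard_involution kron3_mat1)
  moreover have "transpose hadamard3 = hadamard3"
    by (simp add: hadamard3_def kron3_transpose hadamard_transpose)
  ultimately show ?thesis by (simp add: matrix_inv_eqI)
qed

text \<open>It changes column \<open>s\<close> of row \<open>x\<close> of the
  gauge by the sign \<open>(-1)^|x|\<close>; this symmetry is the source of the parity constraint.\<close>

definition complement :: "cfg \<Rightarrow> cfg" where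
  "complement s = (case s of (a, b, c) \<Rightarrow> (\<not> a, \<not> b, \<not> c))"

lemma complement_complement [simp]: "complement (complement s) = s"
  by (cases s) (simp add: complement_def)

lemma hadamard_complement: "hadamard $ x $ (\<not> s) = (-1) ^ of_bool x * hadamard $ x $ s"
  by (simp add: hadamard_def)

lemma hadamard3_complement:
  "hadamard3 $ x $ complement s = (-1) ^ hamming_weight x * hadamard3 $ x $ s"
  by (cases x; cases s)
     (simp add: hadamard3_def complement_def kron3_entry hadamard_complement
                hamming_weight_def power_add)

lemma hadamard3_parity:
  assumes invariant: "\<And>s. r $ complement s = r $ s"
  shows "parity_ok (hadamard3 *v r)"
proof -
  have "(hadamard3 *v r) $ x = 0" if odd: "odd (hamming_weight x)" for x
  proof -
    let ?f = "\<lambda>s. hadamard3 $ x $ s * r $ s"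
    have "(\<Sum>s\<in>UNIV. ?f s) = (\<Sum>s\<in>UNIV. ?f (complement s))"
      by (rule sum.reindex_bij_witness[of _ complement complement]) auto
    also have "\<dots> = - (\<Sum>s\<in>UNIV. ?f s)"
      using odd by (simp add: hadamard3_complement invariant sum_negf)
    finally show ?thesis by (simp add: matrix_vector_mult_def)
  qed
  then show ?thesis unfolding parity_ok_def by blast
qed

text \<open>The Ising signature depends only on which bits agree, hence is complement-invariant.\<close>

lemma ising_sig_complement: "ising_sig J1 J2 J3 $ complement s = ising_sig J1 J2 J3 $ s"
  by (cases s)
     (auto simp: complement_def ising_sig_def sig_of_list_def cfg_index_def split: bool.splits)

theorem mainTheorem17:
  fixes J1 J2 J3 :: real and M N :: nat
  assumes "M \<ge> 1" and "N \<ge> 1"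
  shows "honeycomb_orth_realizable M N (\<lambda>i j. ising_sig J1 J2 J3) (\<lambda>i j. ising_sig J1 J2 J3)"
proof -
  let ?T = "\<lambda>k i j. hadamard"
  have parity: "parity_ok (hadamard3 *v ising_sig J1 J2 J3)"
    by (rule hadamard3_parity) (rule ising_sig_complement)
  have "honeycomb_realization M N (\<lambda>i j. ising_sig J1 J2 J3) (\<lambda>i j. ising_sig J1 J2 J3) ?T"
    using hadamard_invertible parity hadamard3_inverse_transpose
    by (simp add: honeycomb_realization_def flip: hadamard3_def)
  then show ?thesis
    unfolding honeycomb_orth_realizable_def using hadamard_orthogonal by blast
qed

end
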